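(* There exists an admissible structural model $(X,\mathcal A,\mu,\mu^{\otimes2},R,I,\Pi_R,G,E_0,\eta)$ whose underlying set $X$ is finite. In particular, the axiom system (Axioms I, II, III) is satisfiable in ZFC.
   Context: For a nonempty set $X$, an algebra $\mathcal A\subseteq\mathcal P(X)$ contains $\varnothing,X$ and is closed under finite unions and complements. A finitely additive measure $\mu:\mathcal A\to[0,\infty)$ satisfies $\mu(\varnothing)=0$ and $\mu(B_1\sqcup B_2)=\mu(B_1)+\mu(B_2)$ for disjoint $B_1,B_2\in\mathcal A$. $\mathcal A\otimes\mathcal A$ denotes the algebra of subsets of $X\times X$ generated by rectangles $B_1\times B_2$ with $B_i\in\mathcal A$. For relations $H,K\subseteq X\times X$, $H\circ K=\{(x,z):\exists y\,(x,y)\in H,(y,z)\in K\}$. A pre-structural datum is a tuple $(X,\mathcal A,\mu,\mu^{\otimes2},R,I,\Pi_R,G,E_0,\eta)$ where: $X$ is a nonempty set; $\mathcal A$ is an algebra on $X$; $\mu$ is a finitely additive measure on $\mathcal A$; $\mu^{\otimes2}:\mathcal A\otimes\mathcal A\to[0,\infty)$ is finitely additive and satisfies the rectangle rule $\mu^{\otimes2}(B_1\times B_2)=\mu(B_1)\mu(B_2)$ for all $B_1,B_2\in\mathcal A$; $R,I\in\mathcal A$ are disjoint; $\Pi_R:X\to R$ is a map; $G\subseteq X\times X$ with $G\in\mathcal A\otimes\mathcal A$; $E_0\in(0,\infty)$; $\eta\in[0,1]$. Axiom I: $\Pi_R\circ\Pi_R=\Pi_R$, $\Pi_R(r)=r$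 for all $r\in R$, and $\Pi_R^{-1}(B)\in\mathcal A$ for every $B\in\mathcal A$ with $B\subseteq R$. Axiom II: $G$ is reflexive, symmetric, and $G\circ G=G$. Axiom III: (a) $\mu(R)+\mu(I)=E_0$; (b) $\mu(\Pi_R^{-1}(B))=\mu(B)$ for every $B\in\mathcal A$ with $B\subseteq R$; (c) (coupling law) for all $B\in\mathcal A$, $\mu^{\otimes2}((B\times X)\cap G)=\mu(B)+\eta\,\mu^{\otimes2}((\Pi_R^{-1}(B)\times X)\cap G)$ (note $\Pi_R^{-1}(B)=\Pi_R^{-1}(B\cap R)$). An admissible structural model is a pre-structural datum satisfying Axioms I, II and III. *)

theory Defs
  imports "HOL-Analysis.Analysis"
begin

definition fin_add_measure :: "'a set set \<Rightarrow> ('a set \<Rightarrow> real) \<Rightarrow> bool" where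
  "fin_add_measure M m \<longleftrightarrow>
     (\<forall>B\<in>M. 0 \<le> m B) \<and> m {} = 0 \<and>
     (\<forall>B1\<in>M. \<forall>B2\<in>M. B1 \<inter> B2 = {} \<longrightarrow> m (B1 \<union> B2) = m B1 + m B2)"

definition prod_algebra :: "'a set \<Rightarrow> 'a set set \<Rightarrow> ('a \<times> 'a) set set" where
  "prod_algebra X A =
     \<Inter>{M. algebra (X \<times> X) M \<and> {B1 \<times> B2 | B1 B2. B1 \<in> A \<and> B2 \<in> A} \<subseteq> M}"

definition preim :: "'a set \<Rightarrow> ('a \<Rightarrow> 'a) \<Rightarrow> 'a set \<Rightarrow> 'a set" where
  "preim X \<Pi>R B = {x \<in> X. \<Pi>R x \<in> B}"

definition pre_structural_datum ::
  "'a set \<Rightarrow> 'a set set \<Rightarrow> ('a set \<Rightarrow> real) \<Rightarrow> (('a \<times> 'a) set \<Rightarrow> real) \<Rightarrow>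
   'a set \<Rightarrow> 'a set \<Rightarrow> ('a \<Rightarrow> 'a) \<Rightarrow> ('a \<times> 'a) set \<Rightarrow> real \<Rightarrow> real \<Rightarrow> bool" where
  "pre_structural_datum X A \<mu> \<mu>2 R I \<Pi>R G E0 \<eta> \<longleftrightarrow>
     X \<noteq> {} \<and> algebra X A \<and> fin_add_measure A \<mu> \<and>
     fin_add_measure (prod_algebra X A) \<mu>2 \<and>
     (\<forall>B1\<in>A. \<forall>B2\<in>A. \<mu>2 (B1 \<times> B2) = \<mu> B1 * \<mu> B2) \<and>
     R \<in> A \<and> I \<in> A \<and> R \<inter> I = {} \<and>
     (\<forall>x\<in>X. \<Pi>R x \<in> R) \<and>
     G \<subseteq> X \<times> X \<and> G \<in> prod_algebra X A \<and>
     0 < E0 \<and> 0 \<le> \<eta> \<and> \<eta> \<le> 1"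

definition axiom_I :: "'a set \<Rightarrow> 'a set set \<Rightarrow> 'a set \<Rightarrow> ('a \<Rightarrow> 'a) \<Rightarrow> bool" where
  "axiom_I X A R \<Pi>R \<longleftrightarrow>
     (\<forall>x\<in>X. \<Pi>R (\<Pi>R x) = \<Pi>R x) \<and> (\<forall>r\<in>R. \<Pi>R r = r) \<and>
     (\<forall>B\<in>A. B \<subseteq> R \<longrightarrow> preim X \<Pi>R B \<in> A)"

definition axiom_II :: "'a set \<Rightarrow> ('a \<times> 'a) set \<Rightarrow> bool" where
  "axiom_II X G \<longleftrightarrow> refl_on X G \<and> sym G \<and> G O G = G"

definition axiom_III ::
  "'a set \<Rightarrow> 'a set set \<Rightarrow> ('a set \<Rightarrow> real) \<Rightarrow> (('a \<times> 'a) set \<Rightarrow> real) \<Rightarrow>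
   'a set \<Rightarrow> 'a set \<Rightarrow> ('a \<Rightarrow> 'a) \<Rightarrow> ('a \<times> 'a) set \<Rightarrow> real \<Rightarrow> real \<Rightarrow> bool" where
  "axiom_III X A \<mu> \<mu>2 R I \<Pi>R G E0 \<eta> \<longleftrightarrow>
     \<mu> R + \<mu> I = E0 \<and>
     (\<forall>B\<in>A. B \<subseteq> R \<longrightarrow> \<mu> (preim X \<Pi>R B) = \<mu> B) \<and>
     (\<forall>B\<in>A. \<mu>2 ((B \<times> X) \<inter> G) = \<mu> B + \<eta> * \<mu>2 ((preim X \<Pi>R B \<times> X) \<inter> G))"

definition admissible_structural_model ::
  "'a set \<Rightarrow> 'a set set \<Rightarrow> ('a set \<Rightarrow> real) \<Rightarrow> (('a \<times> 'a) set \<Rightarrow> real) \<Rightarrow>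
   'a set \<Rightarrow> 'a set \<Rightarrow> ('a \<Rightarrow> 'a) \<Rightarrow> ('a \<times> 'a) set \<Rightarrow> real \<Rightarrow> real \<Rightarrow> bool" where
  "admissible_structural_model X A \<mu> \<mu>2 R I \<Pi>R G E0 \<eta> \<longleftrightarrow>
     pre_structural_datum X A \<mu> \<mu>2 R I \<Pi>R G E0 \<eta> \<and>
     axiom_I X A R \<Pi>R \<and> axiom_II X G \<and> axiom_III X A \<mu> \<mu>2 R I \<Pi>R G E0 \<eta>"

end

theory Submission
  imports Defs
begin

text \<open>A single point x already carries a model: take Dirac masses at x and at (x, x), R = {x},
  I = {}, \<Pi>R constantly x, G = {(x, x)}, E0 = 1 and \<eta> = 0. With \<eta> = 0 the coupling law
  only asks that (B \<times> X) \<inter> G carries the mass of B, which holds because G is the diagonal.\<close>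

lemma fin_add_measure_point_mass: "fin_add_measure M (\<lambda>B. if x \<in> B then 1 else 0)"
  unfolding fin_add_measure_def by auto

lemma rectangle_in_prod_algebra:
  assumes "B1 \<in> A" "B2 \<in> A"
  shows "B1 \<times> B2 \<in> prod_algebra X A"
  using assms unfolding prod_algebra_def by blast

lemma point_model_admissible:
  "admissible_structural_model {x} (Pow {x})
     (\<lambda>B. if x \<in> B then 1 else 0) (\<lambda>S. if (x, x) \<in> S then 1 else 0)
     {x} {} (\<lambda>_. x) {(x, x)} 1 0"
proof -
  have "{(x, x)} \<in> prod_algebra {x} (Pow {x})"
    using rectangle_in_prod_algebra[of "{x}" "Pow {x}" "{x}"] by simp
  then show ?thesis
    unfolding admissible_structural_model_def pre_structural_datum_def axiom_I_def
      axiom_II_def axiom_III_def preim_def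
    by (auto simp: fin_add_measure_point_mass algebra_Pow refl_on_def sym_def)
qed

theorem theorem5p1:
  shows "\<exists>(X :: nat set) A \<mu> \<mu>2 R I \<Pi>R G E0 \<eta>.
           admissible_structural_model X A \<mu> \<mu>2 R I \<Pi>R G E0 \<eta> \<and> finite X"
  using point_model_admissible[of 0] by blast

end
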